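(* Let $(\Omega,\mathcal{F})$ be a measurable space, $\mathrm{B}_b$ the space of bounded real-valued measurable functions, $C\subset\mathrm{B}_b$ a linear subspace containing the constants, and $H\colon C\to\mathbb{R}$ a convex premium principle. Let $R_{\mathrm{Max}}(X):=\inf\{H(X_0)\mid X_0\in C,\ X_0\ge X\}$ for $X\in\mathrm{B}_b$ and $D_{\mathrm{Min}}(X):=H(X)-R_{\mathrm{Max}}(X)$ for $X\in C$. Let $\mathcal{P}:=\{\mathbb{P}\in\mathrm{ba}_+^1\mid H^*(\mathbb{P})<\infty\}$ and, for $\mathbb{P}\in\mathcal{P}$, $D_{\mathbb{P}}(X):=H(X-\mathbb{E}_{\mathbb{P}}(X))$ for $X\in C$. Then $$D_{\mathrm{Min}}(X)=\min_{\mathbb{P}\in\mathcal{P}}\big(D_{\mathbb{P}}(X)+H^*(\mathbb{P})\big)\quad\text{for all }X\in C.$$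
   Context: A premium principle is a map $H\colon C\to\mathbb{R}$ with $H(X+m)=H(X)+m$ for $X\in C$, $m\in\mathbb{R}$, $H(0)=0$, and $H(X)\ge0$ for $X\in C$ with $X\ge0$ (pointwise order). Convex means $H(\lambda X+(1-\lambda)Y)\le\lambda H(X)+(1-\lambda)H(Y)$ for $\lambda\in[0,1]$. $\mathrm{ba}_+^1$ is the set of finitely additive probability measures on $(\Omega,\mathcal{F})$, $\mathbb{E}_{\mathbb{P}}$ the associated integral, and $H^*(\mathbb{P}):=\sup_{X\in C}(\mathbb{E}_{\mathbb{P}}(X)-H(X))\in[0,\infty]$. *)

theory Defs
  imports "HOL-Analysis.Analysis"
begin

definition Bb :: "'a measure \<Rightarrow> ('a \<Rightarrow> real) set" where
  "Bb M = {X. X \<in> borel_measurable M \<and> bounded (range X)}"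

definition lin_sub_const :: "('a \<Rightarrow> real) set \<Rightarrow> bool" where
  "lin_sub_const C \<longleftrightarrow>
     (\<forall>X\<in>C. \<forall>Y\<in>C. (\<lambda>w. X w + Y w) \<in> C) \<and>
     (\<forall>X\<in>C. \<forall>c::real. (\<lambda>w. c * X w) \<in> C) \<and>
     (\<forall>c::real. (\<lambda>_. c) \<in> C)"

definition premium_principle :: "('a \<Rightarrow> real) set \<Rightarrow> (('a \<Rightarrow> real) \<Rightarrow> real) \<Rightarrow> bool" where
  "premium_principle C H \<longleftrightarrow>
     (\<forall>X\<in>C. \<forall>m::real. H (\<lambda>w. X w + m) = H X + m) \<and>
     H (\<lambda>_. 0) = 0 \<and>
     (\<forall>X\<in>C. (\<forall>w. X w \<ge> 0) \<longrightarrow> H X \<ge> 0)"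

definition convex_on_fun :: "('a \<Rightarrow> real) set \<Rightarrow> (('a \<Rightarrow> real) \<Rightarrow> real) \<Rightarrow> bool" where
  "convex_on_fun C H \<longleftrightarrow>
     (\<forall>X\<in>C. \<forall>Y\<in>C. \<forall>l::real. 0 \<le> l \<and> l \<le> 1 \<longrightarrow>
        H (\<lambda>w. l * X w + (1 - l) * Y w) \<le> l * H X + (1 - l) * H Y)"

text \<open>Finitely additive probability measures (ba_+^1) on M, as set functions on sets M
  (normalised to 0 outside sets M).\<close>
definition ba1 :: "'a measure \<Rightarrow> ('a set \<Rightarrow> real) set" where
  "ba1 M = {P. (\<forall>A\<in>sets M. P A \<ge> 0) \<and> P (space M) = 1 \<and>
       (\<forall>A\<in>sets M. \<forall>B\<in>sets M. A \<inter> B = {} \<longrightarrow> P (A \<union> B) = P A + P B) \<and>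
       (\<forall>A. A \<notin> sets M \<longrightarrow> P A = 0)}"

definition meas_partitions :: "'a measure \<Rightarrow> 'a set set set" where
  "meas_partitions M = {\<A>. finite \<A> \<and> \<A> \<subseteq> sets M \<and> {} \<notin> \<A> \<and>
       \<Union>\<A> = space M \<and> (\<forall>A\<in>\<A>. \<forall>B\<in>\<A>. A \<noteq> B \<longrightarrow> A \<inter> B = {})}"

text \<open>Integral of a bounded measurable function w.r.t. a finitely additive measure:
  supremum of the integrals of measurable simple functions below X (lower sums over
  finite measurable partitions).\<close>
definition ba_integral :: "'a measure \<Rightarrow> ('a set \<Rightarrow> real) \<Rightarrow> ('a \<Rightarrow> real) \<Rightarrow> real" where
  "ba_integral M P X = (SUP \<A>\<in>meas_partitions M. \<Sum>A\<in>\<A>. P A * (INF w\<in>A. X w))"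

definition Hstar :: "'a measure \<Rightarrow> ('a \<Rightarrow> real) set \<Rightarrow> (('a \<Rightarrow> real) \<Rightarrow> real)
    \<Rightarrow> ('a set \<Rightarrow> real) \<Rightarrow> ereal" where
  "Hstar M C H P = (SUP X\<in>C. ereal (ba_integral M P X - H X))"

definition RMax :: "('a \<Rightarrow> real) set \<Rightarrow> (('a \<Rightarrow> real) \<Rightarrow> real) \<Rightarrow> ('a \<Rightarrow> real) \<Rightarrow> ereal" where
  "RMax C H X = (INF X0\<in>{X0\<in>C. \<forall>w. X0 w \<ge> X w}. ereal (H X0))"

definition DMin :: "('a \<Rightarrow> real) set \<Rightarrow> (('a \<Rightarrow> real) \<Rightarrow> real) \<Rightarrow> ('a \<Rightarrow> real) \<Rightarrow> ereal" where
  "DMin C H X = ereal (H X) - RMax C H X"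

definition Pset :: "'a measure \<Rightarrow> ('a \<Rightarrow> real) set \<Rightarrow> (('a \<Rightarrow> real) \<Rightarrow> real) \<Rightarrow> ('a set \<Rightarrow> real) set" where
  "Pset M C H = {P\<in>ba1 M. Hstar M C H P < \<infinity>}"

definition DP :: "'a measure \<Rightarrow> (('a \<Rightarrow> real) \<Rightarrow> real) \<Rightarrow> ('a set \<Rightarrow> real) \<Rightarrow> ('a \<Rightarrow> real) \<Rightarrow> real" where
  "DP M H P X = H (\<lambda>w. X w - ba_integral M P X)"

end

theory Submission
  imports Defs
begin

(* Write rho for R_Max on bounded functions. It is monotone, convex, satisfies
   rho (Y + c) <= rho Y + c and rho <= H on C, so that D_Min X = H X - rho X.
   If P has finite penalty H*(P), then every X0 >= X in C gives
   E_P X <= E_P X0 <= H X0 + H*(P); hence E_P X - H*(P) <= rho X, which is the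
   inequality D_Min X <= D_P X + H*(P).
   For a minimiser, the Hahn-Banach theorem for convex functionals gives a linear l
   on bounded functions with l Y - l X <= rho Y - rho X. Monotonicity and cash
   subadditivity of rho make l positive with l 1 = 1, so A |-> l (1_A) is a finitely
   additive probability P whose integral is l. Then H*(P) <= l X - rho X, and
   D_P X + H*(P) <= H X - l X + l X - rho X = D_Min X. *)

section \<open>Hahn-Banach for convex functionals on spaces of functions\<close>

definition fun_subspace :: "('a \<Rightarrow> real) set \<Rightarrow> bool" where
  "fun_subspace V \<longleftrightarrow> (\<lambda>_. 0) \<in> V \<and>
     (\<forall>x\<in>V. \<forall>y\<in>V. (\<lambda>w. x w + y w) \<in> V) \<and> (\<forall>x\<in>V. \<forall>c. (\<lambda>w. c * x w) \<in> V)"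

definition fun_linear_on :: "('a \<Rightarrow> real) set \<Rightarrow> (('a \<Rightarrow> real) \<Rightarrow> real) \<Rightarrow> bool" where
  "fun_linear_on V l \<longleftrightarrow>
     (\<forall>x\<in>V. \<forall>y\<in>V. l (\<lambda>w. x w + y w) = l x + l y) \<and> (\<forall>x\<in>V. \<forall>c. l (\<lambda>w. c * x w) = c * l x)"

lemma fun_subspace_zero: "fun_subspace V \<Longrightarrow> (\<lambda>_. 0) \<in> V"
  and fun_subspace_add: "fun_subspace V \<Longrightarrow> x \<in> V \<Longrightarrow> y \<in> V \<Longrightarrow> (\<lambda>w. x w + y w) \<in> V"
  and fun_subspace_scale: "fun_subspace V \<Longrightarrow> x \<in> V \<Longrightarrow> (\<lambda>w. c * x w) \<in> V"
  unfolding fun_subspace_def by blast+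

lemma fun_subspace_add_scale:
  "fun_subspace V \<Longrightarrow> x \<in> V \<Longrightarrow> y \<in> V \<Longrightarrow> (\<lambda>w. x w + c * y w) \<in> V"
  using fun_subspace_add[of V x "\<lambda>w. c * y w"] fun_subspace_scale by blast

lemma fun_subspace_diff: "fun_subspace V \<Longrightarrow> x \<in> V \<Longrightarrow> y \<in> V \<Longrightarrow> (\<lambda>w. x w - y w) \<in> V"
  using fun_subspace_add_scale[of V x y "-1"] by simp

lemma fun_subspace_sum:
  assumes "fun_subspace V" "finite I" "\<And>i. i \<in> I \<Longrightarrow> u i \<in> V"
  shows "(\<lambda>w. \<Sum>i\<in>I. u i w) \<in> V"
  using assms(2,3) by (induction I rule: finite_induct) (auto simp: fun_subspace_zero fun_subspace_add assms(1))

lemma fun_linear_on_add: "fun_linear_on V l \<Longrightarrow> x \<in> V \<Longrightarrow> y \<in> V \<Longrightarrow> l (\<lambda>w. x w + y w) = l x + l y"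
  and fun_linear_on_scale: "fun_linear_on V l \<Longrightarrow> x \<in> V \<Longrightarrow> l (\<lambda>w. c * x w) = c * l x"
  unfolding fun_linear_on_def by blast+

lemma fun_linear_on_zero: "fun_linear_on V l \<Longrightarrow> fun_subspace V \<Longrightarrow> l (\<lambda>_. 0) = 0"
  using fun_linear_on_scale[of V l "\<lambda>_. 0" 0] fun_subspace_zero by fastforce

lemma fun_linear_on_diff:
  assumes "fun_linear_on V l" "fun_subspace V" "x \<in> V" "y \<in> V"
  shows "l (\<lambda>w. x w - y w) = l x - l y"
  using fun_linear_on_add[OF assms(1,3) fun_subspace_scale[OF assms(2,4), of "-1"]]
    fun_linear_on_scale[OF assms(1,4), of "-1"] by simp

lemma fun_linear_on_sum:
  assumes "fun_linear_on V l" "fun_subspace V" "finite I" "\<And>i. i \<in> I \<Longrightarrow> u i \<in> V"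
  shows "l (\<lambda>w. \<Sum>i\<in>I. u i w) = (\<Sum>i\<in>I. l (u i))"
  using assms(3,4)
proof (induction I rule: finite_induct)
  case empty
  then show ?case using fun_linear_on_zero[OF assms(1,2)] by simp
next
  case (insert i I)
  then show ?case
    using fun_linear_on_add[OF assms(1)] fun_subspace_sum[OF assms(2) insert.hyps(1)] by simp
qed

lemma convex_on_funD:
  "convex_on_fun V g \<Longrightarrow> x \<in> V \<Longrightarrow> y \<in> V \<Longrightarrow> 0 \<le> a \<Longrightarrow> a \<le> 1 \<Longrightarrow>
    g (\<lambda>w. a * x w + (1 - a) * y w) \<le> a * g x + (1 - a) * g y"
  unfolding convex_on_fun_def by blast

lemma convex_on_fun_translate:
  assumes V: "fun_subspace V" and g: "convex_on_fun V g" and X: "X \<in> V"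
  shows "convex_on_fun V (\<lambda>Y. g (\<lambda>w. X w + Y w) - c)"
  unfolding convex_on_fun_def
proof (intro ballI allI impI)
  fix u v and a :: real
  assume uv: "u \<in> V" "v \<in> V" and a: "0 \<le> a \<and> a \<le> 1"
  have "(\<lambda>w. X w + (a * u w + (1 - a) * v w)) = (\<lambda>w. a * (X w + u w) + (1 - a) * (X w + v w))"
    by (simp add: fun_eq_iff algebra_simps)
  moreover have "g (\<lambda>w. a * (X w + u w) + (1 - a) * (X w + v w))
      \<le> a * g (\<lambda>w. X w + u w) + (1 - a) * g (\<lambda>w. X w + v w)"
    using a by (intro convex_on_funD[OF g] fun_subspace_add[OF V X] uv) auto
  ultimately show "g (\<lambda>w. X w + (a * u w + (1 - a) * v w)) - c
      \<le> a * (g (\<lambda>w. X w + u w) - c) + (1 - a) * (g (\<lambda>w. X w + v w) - c)"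
    by (simp add: algebra_simps)
qed

text \<open>Partial linear functionals below \<open>g\<close> are represented by their graphs, so that
  Zorn's lemma can be applied to set inclusion.\<close>

definition dominated_linear_graph ::
    "('a \<Rightarrow> real) set \<Rightarrow> (('a \<Rightarrow> real) \<Rightarrow> real) \<Rightarrow> (('a \<Rightarrow> real) \<times> real) set \<Rightarrow> bool" where
  "dominated_linear_graph V g G \<longleftrightarrow> Domain G \<subseteq> V \<and> ((\<lambda>_. 0), 0) \<in> G \<and>
     (\<forall>x r y s. (x, r) \<in> G \<longrightarrow> (y, s) \<in> G \<longrightarrow> ((\<lambda>w. x w + y w), r + s) \<in> G) \<and>
     (\<forall>x r c. (x, r) \<in> G \<longrightarrow> ((\<lambda>w. c * x w), c * r) \<in> G) \<and>
     single_valued G \<and> (\<forall>x r. (x, r) \<in> G \<longrightarrow> r \<le> g x)"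

lemma dominated_linear_graphD:
  assumes "dominated_linear_graph V g G"
  shows "(x, r) \<in> G \<Longrightarrow> x \<in> V"
    and "((\<lambda>_. 0), 0) \<in> G"
    and "(x, r) \<in> G \<Longrightarrow> (y, s) \<in> G \<Longrightarrow> ((\<lambda>w. x w + y w), r + s) \<in> G"
    and "(x, r) \<in> G \<Longrightarrow> ((\<lambda>w. c * x w), c * r) \<in> G"
    and "(x, r) \<in> G \<Longrightarrow> (x, s) \<in> G \<Longrightarrow> r = s"
    and "(x, r) \<in> G \<Longrightarrow> r \<le> g x"
  using assms unfolding dominated_linear_graph_def by (auto dest: single_valuedD)

lemma dominated_linear_graph_Union_chain:
  assumes "\<C> \<noteq> {}" "subset.chain {G. dominated_linear_graph V g G} \<C>"
  shows "dominated_linear_graph V g (\<Union>\<C>)"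
proof -
  have dom: "dominated_linear_graph V g G" if "G \<in> \<C>" for G
    using assms(2) that by (auto simp: subset_chain_def)
  have pair: "\<exists>G\<in>\<C>. dominated_linear_graph V g G \<and> p \<in> G \<and> q \<in> G"
    if pq: "p \<in> \<Union>\<C>" "q \<in> \<Union>\<C>" for p q
  proof -
    obtain G where "G \<in> \<C>" "{p, q} \<subseteq> G"
      by (rule finite_subset_Union_chain[of "{p, q}" \<C>]) (use pq assms in auto)
    then show ?thesis using dom by blast
  qed
  show ?thesis
    unfolding dominated_linear_graph_def
  proof (intro conjI allI impI)
    show "Domain (\<Union>\<C>) \<subseteq> V" "((\<lambda>_. 0), 0) \<in> \<Union>\<C>"
      using dom assms(1) by (fastforce simp: dominated_linear_graph_def)+
    show "((\<lambda>w. x w + y w), r + s) \<in> \<Union>\<C>" if "(x, r) \<in> \<Union>\<C>" "(y, s) \<in> \<Union>\<C>" for x r y s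
      using pair[OF that] unfolding dominated_linear_graph_def by blast
    show "((\<lambda>w. c * x w), c * r) \<in> \<Union>\<C>" if "(x, r) \<in> \<Union>\<C>" for x r c
      using pair[OF that that] unfolding dominated_linear_graph_def by blast
    show "r \<le> g x" if "(x, r) \<in> \<Union>\<C>" for x r
      using pair[OF that that] unfolding dominated_linear_graph_def by blast
    show "single_valued (\<Union>\<C>)"
    proof (rule single_valuedI)
      fix x r s assume "(x, r) \<in> \<Union>\<C>" "(x, s) \<in> \<Union>\<C>"
      then show "r = s"
        using pair unfolding dominated_linear_graph_def by (meson single_valuedD)
    qed
  qed
qed

lemma dominated_linear_graph_gap:
  assumes V: "fun_subspace V" and g: "convex_on_fun V g" and G: "dominated_linear_graph V g G"
    and y: "y \<in> V" and uv: "(u, p) \<in> G" "(v, q) \<in> G" and st: "0 < s" "0 < t"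
  shows "t * (p - g (\<lambda>z. u z - s * y z)) \<le> s * (g (\<lambda>z. v z + t * y z) - q)"
proof -
  \<comment> \<open>The point of weight \<open>a\<close> on the segment from \<open>u - s y\<close> to \<open>v + t y\<close> does not involve \<open>y\<close>.\<close>
  define a where "a = t / (s + t)"
  have a: "0 \<le> a" "a \<le> 1" "(s + t) * a = t" "(s + t) * (1 - a) = s"
    using st unfolding a_def by (simp_all add: field_simps)
  then have as: "a * s = (1 - a) * t" by (simp add: algebra_simps)
  have "((\<lambda>z. a * u z + (1 - a) * v z), a * p + (1 - a) * q) \<in> G"
    by (rule dominated_linear_graphD(3)[OF G dominated_linear_graphD(4)[OF G uv(1)]
        dominated_linear_graphD(4)[OF G uv(2)]])
  then have "a * p + (1 - a) * q \<le> g (\<lambda>z. a * u z + (1 - a) * v z)"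
    by (rule dominated_linear_graphD(6)[OF G])
  also have "(\<lambda>z. a * u z + (1 - a) * v z) = (\<lambda>z. a * (u z - s * y z) + (1 - a) * (v z + t * y z))"
  proof
    fix z
    have "a * (s * y z) = (1 - a) * (t * y z)" using as by (metis mult.assoc)
    then show "a * u z + (1 - a) * v z = a * (u z - s * y z) + (1 - a) * (v z + t * y z)"
      by (simp only: right_diff_distrib distrib_left)
  qed
  also have "g \<dots> \<le> a * g (\<lambda>z. u z - s * y z) + (1 - a) * g (\<lambda>z. v z + t * y z)"
  proof -
    have "(\<lambda>z. u z - s * y z) \<in> V" "(\<lambda>z. v z + t * y z) \<in> V"
      by (rule fun_subspace_diff[OF V dominated_linear_graphD(1)[OF G uv(1)] fun_subspace_scale[OF V y]],
          rule fun_subspace_add_scale[OF V dominated_linear_graphD(1)[OF G uv(2)] y])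
    from convex_on_funD[OF g this a(1,2)] show ?thesis .
  qed
  finally have "(s + t) * (a * p + (1 - a) * q)
      \<le> (s + t) * (a * g (\<lambda>z. u z - s * y z) + (1 - a) * g (\<lambda>z. v z + t * y z))"
    using st by (simp add: mult_left_mono)
  then have "t * p + s * q \<le> t * g (\<lambda>z. u z - s * y z) + s * g (\<lambda>z. v z + t * y z)"
    by (simp only: distrib_left mult.assoc[symmetric] a(3,4))
  then show ?thesis by (simp add: algebra_simps)
qed

lemma dominated_linear_graph_extension_value:
  assumes V: "fun_subspace V" and g: "convex_on_fun V g" and G: "dominated_linear_graph V g G"
    and y: "y \<in> V"
  obtains c where "\<And>u p s. (u, p) \<in> G \<Longrightarrow> 0 < s \<Longrightarrow> p - g (\<lambda>z. u z - s * y z) \<le> s * c"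
    and "\<And>v q t. (v, q) \<in> G \<Longrightarrow> 0 < t \<Longrightarrow> t * c \<le> g (\<lambda>z. v z + t * y z) - q"
proof -
  define S where "S = {(p - g (\<lambda>z. u z - s * y z)) / s | u p s. (u, p) \<in> G \<and> 0 < s}"
  have below: "x \<le> (g (\<lambda>z. v z + t * y z) - q) / t" if "x \<in> S" "(v, q) \<in> G" "0 < t" for x v q t
  proof -
    obtain u p s where x: "x = (p - g (\<lambda>z. u z - s * y z)) / s" and up: "(u, p) \<in> G" and "0 < s"
      using \<open>x \<in> S\<close> unfolding S_def by blast
    have "t * (p - g (\<lambda>z. u z - s * y z)) \<le> s * (g (\<lambda>z. v z + t * y z) - q)"
      by (rule dominated_linear_graph_gap[OF V g G y up that(2) \<open>0 < s\<close> that(3)])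
    then show ?thesis
      unfolding x using \<open>0 < s\<close> \<open>0 < t\<close> by (simp add: field_simps)
  qed
  have S_mem: "(p - g (\<lambda>z. u z - s * y z)) / s \<in> S" if "(u, p) \<in> G" "0 < s" for u p s
    unfolding S_def using that by blast
  have zero: "((\<lambda>_. 0), 0) \<in> G" by (rule dominated_linear_graphD(2)[OF G])
  have S_ne: "S \<noteq> {}" using S_mem[OF zero zero_less_one] by blast
  have S_bdd: "bdd_above S" using below[OF _ zero, of _ 1] by (intro bdd_aboveI) auto
  show ?thesis
  proof
    fix u p and s :: real assume "(u, p) \<in> G" "0 < s"
    then have "(p - g (\<lambda>z. u z - s * y z)) / s \<le> Sup S"
      by (rule cSup_upper[OF S_mem S_bdd])
    then show "p - g (\<lambda>z. u z - s * y z) \<le> s * Sup S"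
      using \<open>0 < s\<close> by (simp add: pos_divide_le_eq mult.commute)
  next
    fix v q and t :: real assume "(v, q) \<in> G" "0 < t"
    then have "Sup S \<le> (g (\<lambda>z. v z + t * y z) - q) / t"
      using below by (intro cSup_least[OF S_ne]) auto
    then show "t * Sup S \<le> g (\<lambda>z. v z + t * y z) - q"
      using \<open>0 < t\<close> by (simp add: pos_le_divide_eq mult.commute)
  qed
qed

lemma dominated_linear_graph_adjoin_single_valued:
  assumes G: "dominated_linear_graph V g G" and y: "y \<notin> Domain G"
  shows "single_valued {((\<lambda>z. v z + t * y z), q + t * c) | v q t. (v, q) \<in> G}"
proof (rule single_valuedI)
  note GD = dominated_linear_graphD[OF G]
  fix x r r'
  assume "(x, r) \<in> {((\<lambda>z. v z + t * y z), q + t * c) | v q t. (v, q) \<in> G}"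
    and "(x, r') \<in> {((\<lambda>z. v z + t * y z), q + t * c) | v q t. (v, q) \<in> G}"
  then obtain v q t v' q' t' where vq: "(v, q) \<in> G" "x = (\<lambda>z. v z + t * y z)" "r = q + t * c"
    and vq': "(v', q') \<in> G" "x = (\<lambda>z. v' z + t' * y z)" "r' = q' + t' * c"
    by blast
  then have eq: "v z + t * y z = v' z + t' * y z" for z
    by metis
  show "r = r'"
  proof (cases "t = t'")
    case True
    then have "v = v'" using eq by auto
    then show ?thesis using vq vq' True GD(5) by blast
  next
    case False
    have "((\<lambda>z. (1 / (t - t')) * (v' z + (-1) * v z)), (1 / (t - t')) * (q' + (-1) * q)) \<in> G"
      by (rule GD(4)[OF GD(3)[OF vq'(1) GD(4)[OF vq(1)]]])
    moreover have "(\<lambda>z. (1 / (t - t')) * (v' z + (-1) * v z)) = y"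
      using eq False by (auto simp: fun_eq_iff field_simps)
    ultimately show ?thesis using y by auto
  qed
qed

lemma dominated_linear_graph_adjoin_le:
  assumes G: "dominated_linear_graph V g G" and vq: "(v, q) \<in> G"
    and lower: "\<And>u p s. (u, p) \<in> G \<Longrightarrow> 0 < s \<Longrightarrow> p - g (\<lambda>z. u z - s * y z) \<le> s * c"
    and upper: "\<And>v q t. (v, q) \<in> G \<Longrightarrow> 0 < t \<Longrightarrow> t * c \<le> g (\<lambda>z. v z + t * y z) - q"
  shows "q + t * c \<le> g (\<lambda>z. v z + t * y z)"
proof -
  consider "t < 0" | "t = 0" | "0 < t" by linarith
  then show ?thesis
  proof cases
    case 1
    with lower[OF vq, of "-t"] show ?thesis by (simp add: algebra_simps)
  next
    case 2
    with dominated_linear_graphD(6)[OF G vq] show ?thesis by simp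
  next
    case 3
    with upper[OF vq, of t] show ?thesis by (simp add: algebra_simps)
  qed
qed

lemma dominated_linear_graph_adjoin:
  assumes V: "fun_subspace V" and G: "dominated_linear_graph V g G"
    and y: "y \<in> V" "y \<notin> Domain G"
    and lower: "\<And>u p s. (u, p) \<in> G \<Longrightarrow> 0 < s \<Longrightarrow> p - g (\<lambda>z. u z - s * y z) \<le> s * c"
    and upper: "\<And>v q t. (v, q) \<in> G \<Longrightarrow> 0 < t \<Longrightarrow> t * c \<le> g (\<lambda>z. v z + t * y z) - q"
  shows "dominated_linear_graph V g {((\<lambda>z. v z + t * y z), q + t * c) | v q t. (v, q) \<in> G}"
    (is "dominated_linear_graph V g ?G'")
proof -
  have G'I: "(x, r) \<in> ?G'" if "(v, q) \<in> G" "x = (\<lambda>z. v z + t * y z)" "r = q + t * c"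
    for x r v q t
    using that by blast
  note GD = dominated_linear_graphD[OF G]
  show ?thesis
    unfolding dominated_linear_graph_def
  proof (intro conjI allI impI)
    show "Domain ?G' \<subseteq> V"
      using fun_subspace_add_scale[OF V GD(1) y(1)] by blast
    show "((\<lambda>_. 0), 0) \<in> ?G'"
      by (rule G'I[OF GD(2), where t = 0]) simp_all
    show "single_valued ?G'"
      by (rule dominated_linear_graph_adjoin_single_valued[OF G y(2)])
    show "r \<le> g x" if xr: "(x, r) \<in> ?G'" for x r
    proof -
      obtain v q t where vq: "(v, q) \<in> G" and x: "x = (\<lambda>z. v z + t * y z)" and r: "r = q + t * c"
        using xr by blast
      show ?thesis
        unfolding x r by (rule dominated_linear_graph_adjoin_le[OF G vq lower upper])
    qed
  next
    fix x r x' r'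
    assume "(x, r) \<in> ?G'" "(x', r') \<in> ?G'"
    then obtain v q t v' q' t' where "(v, q) \<in> G" "x = (\<lambda>z. v z + t * y z)" "r = q + t * c"
      and "(v', q') \<in> G" "x' = (\<lambda>z. v' z + t' * y z)" "r' = q' + t' * c"
      by blast
    then show "((\<lambda>w. x w + x' w), r + r') \<in> ?G'"
      by (intro G'I[OF GD(3), where t = "t + t'"]) (simp_all add: algebra_simps)
  next
    fix x r a
    assume "(x, r) \<in> ?G'"
    then obtain v q t where "(v, q) \<in> G" "x = (\<lambda>z. v z + t * y z)" "r = q + t * c"
      by blast
    then show "((\<lambda>w. a * x w), a * r) \<in> ?G'"
      by (intro G'I[OF GD(4), where t = "a * t"]) (simp_all add: algebra_simps)
  qed
qed

lemma dominated_linear_graph_extend: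
  assumes V: "fun_subspace V" and g: "convex_on_fun V g" and G: "dominated_linear_graph V g G"
    and y: "y \<in> V" "y \<notin> Domain G"
  shows "\<exists>G'. dominated_linear_graph V g G' \<and> G \<subset> G'"
proof -
  obtain c where lower: "\<And>u p s. (u, p) \<in> G \<Longrightarrow> 0 < s \<Longrightarrow> p - g (\<lambda>z. u z - s * y z) \<le> s * c"
    and upper: "\<And>v q t. (v, q) \<in> G \<Longrightarrow> 0 < t \<Longrightarrow> t * c \<le> g (\<lambda>z. v z + t * y z) - q"
    using dominated_linear_graph_extension_value[OF V g G y(1)] by blast
  let ?G' = "{((\<lambda>z. v z + t * y z), q + t * c) | v q t. (v, q) \<in> G}"
  have "G \<subseteq> ?G'"
  proof (rule subrelI)
    fix x r assume "(x, r) \<in> G"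
    moreover have "(x, r) = ((\<lambda>z. x z + 0 * y z), r + 0 * c)" by simp
    ultimately show "(x, r) \<in> ?G'" by blast
  qed
  moreover have "(y, c) \<in> ?G'"
    using dominated_linear_graphD(2)[OF G]
    by (intro CollectI exI[of _ "\<lambda>_. 0"] exI[of _ "0::real"] exI[of _ "1::real"]) simp
  ultimately show ?thesis
    using dominated_linear_graph_adjoin[OF V G y lower upper] y(2) by blast
qed

theorem hahn_banach_convex:
  assumes V: "fun_subspace V" and g: "convex_on_fun V g" and g0: "0 \<le> g (\<lambda>_. 0)"
  shows "\<exists>l. fun_linear_on V l \<and> (\<forall>x\<in>V. l x \<le> g x)"
proof -
  have "dominated_linear_graph V g {((\<lambda>_. 0), 0)}"
    using fun_subspace_zero[OF V] g0 by (auto simp: dominated_linear_graph_def single_valued_def)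
  then have "\<exists>G\<in>{G. dominated_linear_graph V g G}.
      \<forall>G'\<in>{G. dominated_linear_graph V g G}. G \<subseteq> G' \<longrightarrow> G' = G"
    by (intro subset_Zorn_nonempty) (auto intro: dominated_linear_graph_Union_chain)
  then obtain G where G: "dominated_linear_graph V g G"
    and max: "\<And>G'. dominated_linear_graph V g G' \<Longrightarrow> G \<subseteq> G' \<Longrightarrow> G' = G"
    by blast
  note GD = dominated_linear_graphD[OF G]
  have total: "\<exists>r. (x, r) \<in> G" if "x \<in> V" for x
    using dominated_linear_graph_extend[OF V g G that] max by blast
  define l where "l x = (THE r. (x, r) \<in> G)" for x
  have l_eq: "l x = r" if "(x, r) \<in> G" for x r
    unfolding l_def using that by (rule the_equality) (rule GD(5)[OF _ that])
  have l_graph: "(x, l x) \<in> G" if "x \<in> V" for x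
    using total[OF that] l_eq by blast
  have "fun_linear_on V l"
    unfolding fun_linear_on_def using l_eq[OF GD(3)[OF l_graph l_graph]] l_eq[OF GD(4)[OF l_graph]]
    by blast
  moreover have "\<forall>x\<in>V. l x \<le> g x"
    using GD(6)[OF l_graph] by blast
  ultimately show ?thesis by blast
qed

section \<open>Bounded functions and finitely additive probabilities\<close>

definition bfun :: "('a \<Rightarrow> real) set" where
  "bfun = {Y. bounded (range Y)}"

lemma bfun_iff_abs_le: "Y \<in> bfun \<longleftrightarrow> (\<exists>B. \<forall>w. \<bar>Y w\<bar> \<le> B)"
  by (auto simp: bfun_def bounded_real)

lemma fun_subspace_bfun: "fun_subspace bfun"
  unfolding fun_subspace_def bfun_def
  using bounded_plus_comp bounded_scaleR_comp[where 'b = real] by auto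

lemma bfun_const: "(\<lambda>_. c) \<in> bfun"
  by (simp add: bfun_def)

lemma bfun_indicator: "indicator A \<in> bfun"
  unfolding bfun_def by (rule CollectI, rule bounded_subset[of "{0, 1}"]) (auto simp: indicator_def)

lemma bfun_simple_function:
  fixes f :: "'a set \<Rightarrow> real"
  assumes "finite \<A>"
  shows "(\<lambda>w. \<Sum>A\<in>\<A>. f A * indicator A w) \<in> bfun"
  by (rule fun_subspace_sum[OF fun_subspace_bfun assms])
    (rule fun_subspace_scale[OF fun_subspace_bfun bfun_indicator])

lemma bfun_bdd_below: "Y \<in> bfun \<Longrightarrow> bdd_below (Y ` A)"
  unfolding bfun_def by (metis bounded_imp_bdd_below bounded_subset image_mono subset_UNIV mem_Collect_eq)

lemma Bb_subset_bfun: "Bb M \<subseteq> bfun"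
  by (auto simp: Bb_def bfun_def)

lemma bfun_finite_range_floor:
  assumes "Y \<in> bfun" "0 < e"
  shows "finite (range (\<lambda>w. \<lfloor>Y w / e\<rfloor>))"
proof -
  obtain B where B: "\<And>w. \<bar>Y w\<bar> \<le> B" using assms(1) by (auto simp: bfun_iff_abs_le)
  have "range (\<lambda>w. \<lfloor>Y w / e\<rfloor>) \<subseteq> {\<lfloor>- B / e\<rfloor>..\<lfloor>B / e\<rfloor>}"
  proof clarify
    fix w
    have "- B \<le> Y w" "Y w \<le> B" using B[of w] by linarith+
    then have "- B / e \<le> Y w / e" "Y w / e \<le> B / e"
      using assms(2) by (intro divide_right_mono, simp_all)+
    then show "\<lfloor>Y w / e\<rfloor> \<in> {\<lfloor>- B / e\<rfloor>..\<lfloor>B / e\<rfloor>}" by (auto intro: floor_mono)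
  qed
  then show ?thesis by (rule finite_subset) simp
qed

lemma ba1_nonneg: "P \<in> ba1 M \<Longrightarrow> A \<in> sets M \<Longrightarrow> 0 \<le> P A"
  and ba1_space: "P \<in> ba1 M \<Longrightarrow> P (space M) = 1"
  and ba1_additive:
    "P \<in> ba1 M \<Longrightarrow> A \<in> sets M \<Longrightarrow> B \<in> sets M \<Longrightarrow> A \<inter> B = {} \<Longrightarrow> P (A \<union> B) = P A + P B"
  unfolding ba1_def by simp_all

lemma ba1_finite_additive:
  assumes P: "P \<in> ba1 M" and "finite \<A>" "\<A> \<subseteq> sets M"
    and "\<forall>A\<in>\<A>. \<forall>B\<in>\<A>. A \<noteq> B \<longrightarrow> A \<inter> B = {}"
  shows "P (\<Union>\<A>) = (\<Sum>A\<in>\<A>. P A)"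
  using assms(2-)
proof (induction \<A> rule: finite_induct)
  case empty
  have "P ({} \<union> {}) = P {} + P {}" by (rule ba1_additive[OF P]) simp_all
  then show ?case by simp
next
  case (insert A \<A>)
  have "A \<inter> B = {}" if "B \<in> \<A>" for B
    using insert.prems(2) insert.hyps(2) that by fastforce
  then have disj: "A \<inter> \<Union>\<A> = {}" by blast
  have "P (\<Union>(insert A \<A>)) = P (A \<union> \<Union>\<A>)" by simp
  also have "\<dots> = P A + P (\<Union>\<A>)"
    using insert.hyps(1) insert.prems(1) disj by (intro ba1_additive[OF P]) auto
  also have "P (\<Union>\<A>) = (\<Sum>B\<in>\<A>. P B)"
    by (rule insert.IH) (use insert.prems in auto)
  finally show ?case using insert.hyps by simp
qed

lemma ba1_sum_partition: "P \<in> ba1 M \<Longrightarrow> \<A> \<in> meas_partitions M \<Longrightarrow> (\<Sum>A\<in>\<A>. P A) = 1"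
  using ba1_finite_additive[of P M \<A>] ba1_space[of P M] by (auto simp: meas_partitions_def)

lemma meas_partitions_nonempty: "meas_partitions M \<noteq> {}"
proof (cases "space M = {}")
  case True
  then have "{} \<in> meas_partitions M" by (simp add: meas_partitions_def)
  then show ?thesis by blast
next
  case False
  then have "{space M} \<in> meas_partitions M" by (simp add: meas_partitions_def)
  then show ?thesis by blast
qed

lemma ba_lower_sum_le:
  assumes P: "P \<in> ba1 M" and \<A>: "\<A> \<in> meas_partitions M" and Y: "Y \<in> bfun"
    and B: "\<And>w. w \<in> space M \<Longrightarrow> Y w \<le> B"
  shows "(\<Sum>A\<in>\<A>. P A * (INF w\<in>A. Y w)) \<le> B"
proof -
  have "(\<Sum>A\<in>\<A>. P A * (INF w\<in>A. Y w)) \<le> (\<Sum>A\<in>\<A>. P A * B)"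
  proof (rule sum_mono)
    fix A assume "A \<in> \<A>"
    then have "A \<in> sets M" "A \<noteq> {}" using \<A> by (auto simp: meas_partitions_def)
    then obtain w where "w \<in> A" "w \<in> space M" using sets.sets_into_space by blast
    then have "(INF w\<in>A. Y w) \<le> B"
      using cINF_lower[OF bfun_bdd_below[OF Y] \<open>w \<in> A\<close>] B[OF \<open>w \<in> space M\<close>] by linarith
    then show "P A * (INF w\<in>A. Y w) \<le> P A * B"
      using ba1_nonneg[OF P \<open>A \<in> sets M\<close>] by (rule mult_left_mono)
  qed
  also have "\<dots> = B" using ba1_sum_partition[OF P \<A>] by (simp add: sum_distrib_right[symmetric])
  finally show ?thesis .
qed

lemma ba_integral_mono:
  assumes P: "P \<in> ba1 M" and X: "X \<in> bfun" and Y: "Y \<in> bfun"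
    and le: "\<And>w. w \<in> space M \<Longrightarrow> X w \<le> Y w"
  shows "ba_integral M P X \<le> ba_integral M P Y"
  unfolding ba_integral_def
proof (rule cSUP_mono[OF meas_partitions_nonempty])
  obtain B where "\<And>w. \<bar>Y w\<bar> \<le> B" using Y by (auto simp: bfun_iff_abs_le)
  then show "bdd_above ((\<lambda>\<A>. \<Sum>A\<in>\<A>. P A * (INF w\<in>A. Y w)) ` meas_partitions M)"
    using ba_lower_sum_le[OF P _ Y] by (intro bdd_aboveI[of _ B]) (auto simp: abs_le_iff)
next
  fix \<A> assume \<A>: "\<A> \<in> meas_partitions M"
  have "(\<Sum>A\<in>\<A>. P A * (INF w\<in>A. X w)) \<le> (\<Sum>A\<in>\<A>. P A * (INF w\<in>A. Y w))"
  proof (rule sum_mono)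
    fix A assume "A \<in> \<A>"
    then have "A \<in> sets M" "A \<noteq> {}" using \<A> by (auto simp: meas_partitions_def)
    then have "(INF w\<in>A. X w) \<le> (INF w\<in>A. Y w)"
      using le sets.sets_into_space by (intro cINF_mono bfun_bdd_below[OF X]) blast+
    then show "P A * (INF w\<in>A. X w) \<le> P A * (INF w\<in>A. Y w)"
      using ba1_nonneg[OF P \<open>A \<in> sets M\<close>] by (rule mult_left_mono)
  qed
  then show "\<exists>\<A>'\<in>meas_partitions M.
      (\<Sum>A\<in>\<A>. P A * (INF w\<in>A. X w)) \<le> (\<Sum>A\<in>\<A>'. P A * (INF w\<in>A. Y w))"
    using \<A> by blast
qed

lemma meas_partition_sum_indicator:
  fixes f :: "'a set \<Rightarrow> real"
  assumes "\<A> \<in> meas_partitions M" "A \<in> \<A>" "w \<in> A"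
  shows "(\<Sum>B\<in>\<A>. f B * indicator B w) = f A"
proof -
  have "(\<Sum>B\<in>\<A>. f B * indicator B w) = (\<Sum>B\<in>\<A>. if B = A then f A else 0)"
  proof (rule sum.cong)
    fix B assume "B \<in> \<A>"
    then have "B \<noteq> A \<Longrightarrow> w \<notin> B" using assms unfolding meas_partitions_def by blast
    then show "f B * indicator B w = (if B = A then f A else 0)" using assms(3) by auto
  qed simp
  moreover have "finite \<A>" using assms(1) by (simp add: meas_partitions_def)
  ultimately show ?thesis using assms(2) by simp
qed

lemma level_sets_meas_partition:
  assumes "space M = UNIV" "finite (range f)" "\<And>k. f -` {k} \<in> sets M"
  shows "(\<lambda>k. f -` {k}) ` range f \<in> meas_partitions M"
  unfolding meas_partitions_def
proof (intro CollectI conjI)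
  show "finite ((\<lambda>k. f -` {k}) ` range f)" using assms(2) by simp
  show "(\<lambda>k. f -` {k}) ` range f \<subseteq> sets M" using assms(3) by auto
  show "{} \<notin> (\<lambda>k. f -` {k}) ` range f" by auto
  show "\<Union> ((\<lambda>k. f -` {k}) ` range f) = space M" using assms(1) by auto
  show "\<forall>A\<in>(\<lambda>k. f -` {k}) ` range f. \<forall>B\<in>(\<lambda>k. f -` {k}) ` range f. A \<noteq> B \<longrightarrow> A \<inter> B = {}"
    by auto
qed

lemma floor_level_sets_meas_partition:
  assumes "space M = UNIV" "Y \<in> bfun" "Y \<in> borel_measurable M" "0 < e"
  shows "(\<lambda>k. (\<lambda>w. \<lfloor>Y w / e\<rfloor>) -` {k}) ` range (\<lambda>w. \<lfloor>Y w / e\<rfloor>) \<in> meas_partitions M"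
proof (rule level_sets_meas_partition[OF assms(1) bfun_finite_range_floor[OF assms(2,4)]])
  fix k
  have "(\<lambda>w. \<lfloor>Y w / e\<rfloor>) -` {k} = {w \<in> space M. \<lfloor>Y w / e\<rfloor> = k}" using assms(1) by auto
  also have "\<dots> \<in> sets M" using assms(3) by measurable
  finally show "(\<lambda>w. \<lfloor>Y w / e\<rfloor>) -` {k} \<in> sets M" .
qed

section \<open>Positive normalised functionals are integrals\<close>

locale positive_unital_functional =
  fixes l :: "('a \<Rightarrow> real) \<Rightarrow> real"
  assumes linear: "fun_linear_on bfun l"
    and nonneg: "\<And>x. x \<in> bfun \<Longrightarrow> (\<And>w. 0 \<le> x w) \<Longrightarrow> 0 \<le> l x"
    and unital: "l (\<lambda>_. 1) = 1"
begin

lemma mono: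
  assumes "x \<in> bfun" "y \<in> bfun" "\<And>w. x w \<le> y w"
  shows "l x \<le> l y"
  using nonneg[OF fun_subspace_diff[OF fun_subspace_bfun assms(2,1)]] assms(3)
    fun_linear_on_diff[OF linear fun_subspace_bfun assms(2,1)] by simp

lemma const: "l (\<lambda>_. c) = c"
  using fun_linear_on_scale[OF linear bfun_const[of 1], of c] unital by simp

lemma add_const: "x \<in> bfun \<Longrightarrow> l (\<lambda>w. x w + c) = l x + c"
  using fun_linear_on_add[OF linear _ bfun_const] const by simp

definition charge :: "'a measure \<Rightarrow> 'a set \<Rightarrow> real" where
  "charge M A = (if A \<in> sets M then l (indicator A) else 0)"

lemma charge_ba1:
  assumes "space M = UNIV"
  shows "charge M \<in> ba1 M"
  unfolding ba1_def
proof (intro CollectI conjI ballI allI impI)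
  show "0 \<le> charge M A" if "A \<in> sets M" for A
    using that nonneg[OF bfun_indicator] by (simp add: charge_def)
  show "charge M (space M) = 1"
    using assms sets.top[of M] unital by (simp add: charge_def)
  show "charge M (A \<union> B) = charge M A + charge M B"
    if "A \<in> sets M" "B \<in> sets M" "A \<inter> B = {}" for A B
  proof -
    have "indicator (A \<union> B) = (\<lambda>w. indicator A w + indicator B w :: real)"
      using that(3) by (auto simp: fun_eq_iff indicator_def)
    then show ?thesis
      using that fun_linear_on_add[OF linear bfun_indicator bfun_indicator] by (simp add: charge_def)
  qed
  show "charge M A = 0" if "A \<notin> sets M" for A
    using that by (simp add: charge_def)
qed

lemma lower_sum_eq:
  assumes "\<A> \<in> meas_partitions M"
  shows "(\<Sum>A\<in>\<A>. charge M A * f A) = l (\<lambda>w. \<Sum>A\<in>\<A>. f A * indicator A w)"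
proof -
  have \<A>: "finite \<A>" "\<A> \<subseteq> sets M" using assms by (auto simp: meas_partitions_def)
  have "l (\<lambda>w. \<Sum>A\<in>\<A>. f A * indicator A w) = (\<Sum>A\<in>\<A>. l (\<lambda>w. f A * indicator A w))"
    by (rule fun_linear_on_sum[OF linear fun_subspace_bfun \<A>(1)])
      (rule fun_subspace_scale[OF fun_subspace_bfun bfun_indicator])
  also have "\<dots> = (\<Sum>A\<in>\<A>. charge M A * f A)"
  proof (rule sum.cong)
    fix A assume "A \<in> \<A>"
    then have "A \<in> sets M" using \<A>(2) by blast
    then show "l (\<lambda>w. f A * indicator A w) = charge M A * f A"
      using fun_linear_on_scale[OF linear bfun_indicator] by (simp add: charge_def mult.commute)
  qed simp
  finally show ?thesis by simp
qed

lemma lower_sum_charge_le: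
  assumes "space M = UNIV" "\<A> \<in> meas_partitions M" "Y \<in> bfun"
  shows "(\<Sum>A\<in>\<A>. charge M A * (INF w\<in>A. Y w)) \<le> l Y"
proof -
  have "(\<Sum>A\<in>\<A>. (INF v\<in>A. Y v) * indicator A w) \<le> Y w" for w
  proof -
    have "w \<in> \<Union>\<A>" using assms(1,2) by (simp add: meas_partitions_def)
    then obtain A where A: "A \<in> \<A>" "w \<in> A" by blast
    show ?thesis
      unfolding meas_partition_sum_indicator[OF assms(2) A]
      by (rule cINF_lower[OF bfun_bdd_below[OF assms(3)] A(2)])
  qed
  moreover have "(\<lambda>w. \<Sum>A\<in>\<A>. (INF v\<in>A. Y v) * indicator A w) \<in> bfun"
    using assms(2) by (intro bfun_simple_function) (simp add: meas_partitions_def)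
  ultimately have "l (\<lambda>w. \<Sum>A\<in>\<A>. (INF v\<in>A. Y v) * indicator A w) \<le> l Y"
    using mono[OF _ assms(3)] by blast
  then show ?thesis
    unfolding lower_sum_eq[OF assms(2)] .
qed

lemma lower_sum_charge_ge:
  assumes "space M = UNIV" "Y \<in> bfun" "Y \<in> borel_measurable M" "0 < e"
  shows "\<exists>\<A>\<in>meas_partitions M. l Y - e \<le> (\<Sum>A\<in>\<A>. charge M A * (INF w\<in>A. Y w))"
proof -
  \<comment> \<open>On each level set of \<open>f\<close>, the values of \<open>Y\<close> differ by less than \<open>e\<close>.\<close>
  define f where "f w = \<lfloor>Y w / e\<rfloor>" for w
  define \<A> where "\<A> = (\<lambda>k. f -` {k}) ` range f"
  have \<A>: "\<A> \<in> meas_partitions M"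
    unfolding \<A>_def f_def by (rule floor_level_sets_meas_partition[OF assms])
  have "Y w - e \<le> (\<Sum>A\<in>\<A>. (INF v\<in>A. Y v) * indicator A w)" for w
  proof -
    have "(\<Sum>A\<in>\<A>. (INF v\<in>A. Y v) * indicator A w) = (INF v\<in>f -` {f w}. Y v)"
      by (rule meas_partition_sum_indicator[OF \<A>]) (auto simp: \<A>_def)
    moreover have "real_of_int (f w) * e \<le> (INF v\<in>f -` {f w}. Y v)"
    proof (rule cINF_greatest)
      fix v assume "v \<in> f -` {f w}"
      then have "real_of_int (f w) \<le> Y v / e"
        using of_int_floor_le[of "Y v / e"] by (simp add: f_def)
      then show "real_of_int (f w) * e \<le> Y v"
        using assms(4) by (simp add: pos_le_divide_eq)
    qed blast
    moreover have "Y w / e < real_of_int (f w) + 1"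
      unfolding f_def by (rule real_of_int_floor_add_one_gt)
    then have "Y w - e < real_of_int (f w) * e"
      using assms(4) by (simp add: pos_divide_less_eq algebra_simps)
    ultimately show ?thesis by linarith
  qed
  moreover have "(\<lambda>w. \<Sum>A\<in>\<A>. (INF v\<in>A. Y v) * indicator A w) \<in> bfun"
    using \<A> by (intro bfun_simple_function) (simp add: meas_partitions_def)
  ultimately have "l (\<lambda>w. Y w - e) \<le> l (\<lambda>w. \<Sum>A\<in>\<A>. (INF v\<in>A. Y v) * indicator A w)"
    using fun_subspace_diff[OF fun_subspace_bfun assms(2) bfun_const] by (intro mono) auto
  moreover have "l (\<lambda>w. Y w - e) = l Y - e"
    using add_const[OF assms(2), of "- e"] by simp
  ultimately show ?thesis
    using lower_sum_eq[OF \<A>, of "\<lambda>A. INF v\<in>A. Y v"] by (intro bexI[OF _ \<A>]) linarith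
qed

theorem ba_integral_charge:
  assumes "space M = UNIV" "Y \<in> bfun" "Y \<in> borel_measurable M"
  shows "ba_integral M (charge M) Y = l Y"
proof -
  let ?S = "(\<lambda>\<A>. \<Sum>A\<in>\<A>. charge M A * (INF w\<in>A. Y w)) ` meas_partitions M"
  have le: "Sup ?S \<le> l Y"
    using lower_sum_charge_le[OF assms(1) _ assms(2)]
    by (intro cSUP_least[OF meas_partitions_nonempty])
  have bdd: "bdd_above ?S"
    using lower_sum_charge_le[OF assms(1) _ assms(2)] by (intro bdd_aboveI[of _ "l Y"]) blast
  have "l Y \<le> Sup ?S + e" if e: "0 < e" for e
  proof -
    obtain \<A> where \<A>: "\<A> \<in> meas_partitions M"
      and approx: "l Y - e \<le> (\<Sum>A\<in>\<A>. charge M A * (INF w\<in>A. Y w))"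
      using lower_sum_charge_ge[OF assms e] by blast
    show ?thesis using cSUP_upper[OF \<A> bdd] approx by linarith
  qed
  then have "l Y \<le> Sup ?S" by (rule field_le_epsilon)
  with le show ?thesis unfolding ba_integral_def by simp
qed

end

section \<open>The maximal risk measure and the dual representation\<close>

definition rmax :: "('a \<Rightarrow> real) set \<Rightarrow> (('a \<Rightarrow> real) \<Rightarrow> real) \<Rightarrow> ('a \<Rightarrow> real) \<Rightarrow> real" where
  "rmax C H Y = (INF X0\<in>{X0\<in>C. \<forall>w. X0 w \<ge> Y w}. H X0)"

locale bounded_premium_principle =
  fixes C :: "('a \<Rightarrow> real) set" and H :: "('a \<Rightarrow> real) \<Rightarrow> real"
  assumes lin_sub_const: "lin_sub_const C"
    and premium_principle: "premium_principle C H"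
    and bounded: "C \<subseteq> bfun"
begin

lemma const_mem: "(\<lambda>_. c) \<in> C"
  and add_mem: "X \<in> C \<Longrightarrow> Y \<in> C \<Longrightarrow> (\<lambda>w. X w + Y w) \<in> C"
  and scale_mem: "X \<in> C \<Longrightarrow> (\<lambda>w. c * X w) \<in> C"
  using lin_sub_const unfolding lin_sub_const_def by blast+

lemma add_const_mem: "X \<in> C \<Longrightarrow> (\<lambda>w. X w + c) \<in> C"
  using add_mem[OF _ const_mem] .

lemma H_add_const: "X \<in> C \<Longrightarrow> H (\<lambda>w. X w + m) = H X + m"
  and H_nonneg: "X \<in> C \<Longrightarrow> (\<And>w. 0 \<le> X w) \<Longrightarrow> 0 \<le> H X"
  using premium_principle unfolding premium_principle_def by blast+

lemma dominating_nonempty: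
  assumes "Y \<in> bfun"
  shows "{X0\<in>C. \<forall>w. X0 w \<ge> Y w} \<noteq> {}"
proof -
  obtain B where "\<And>w. \<bar>Y w\<bar> \<le> B" using assms by (auto simp: bfun_iff_abs_le)
  then have "(\<lambda>_. B) \<in> {X0\<in>C. \<forall>w. X0 w \<ge> Y w}" using const_mem by (auto simp: abs_le_iff)
  then show ?thesis by blast
qed

lemma bdd_below_dominating:
  assumes "Y \<in> bfun"
  shows "bdd_below (H ` {X0\<in>C. \<forall>w. X0 w \<ge> Y w})"
proof -
  obtain B where B: "\<And>w. \<bar>Y w\<bar> \<le> B" using assms by (auto simp: bfun_iff_abs_le)
  have "- B \<le> H X0" if "X0 \<in> C" "\<forall>w. X0 w \<ge> Y w" for X0
  proof -
    have "0 \<le> X0 w + B" for w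
      using B[of w] spec[OF that(2), of w] unfolding abs_le_iff by linarith
    then have "0 \<le> H (\<lambda>w. X0 w + B)" by (rule H_nonneg[OF add_const_mem[OF that(1)]])
    then show ?thesis using H_add_const[OF that(1)] by simp
  qed
  then show ?thesis by (intro bdd_belowI[of _ "- B"]) blast
qed

lemma RMax_eq_rmax: "Y \<in> bfun \<Longrightarrow> RMax C H Y = ereal (rmax C H Y)"
  unfolding RMax_def rmax_def
  using ereal_Inf'[OF bdd_below_dominating] dominating_nonempty by (simp add: image_comp)

lemma rmax_le: "Y \<in> bfun \<Longrightarrow> X0 \<in> C \<Longrightarrow> (\<And>w. Y w \<le> X0 w) \<Longrightarrow> rmax C H Y \<le> H X0"
  unfolding rmax_def by (rule cINF_lower[OF bdd_below_dominating]) auto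

lemma rmax_greatest:
  "Y \<in> bfun \<Longrightarrow> (\<And>X0. X0 \<in> C \<Longrightarrow> (\<forall>w. Y w \<le> X0 w) \<Longrightarrow> c \<le> H X0) \<Longrightarrow> c \<le> rmax C H Y"
  unfolding rmax_def by (rule cINF_greatest[OF dominating_nonempty]) auto

lemma rmax_approx:
  assumes "Y \<in> bfun" "0 < e"
  shows "\<exists>X0\<in>C. (\<forall>w. Y w \<le> X0 w) \<and> H X0 < rmax C H Y + e"
proof -
  have "(INF X0\<in>{X0\<in>C. \<forall>w. X0 w \<ge> Y w}. H X0) < rmax C H Y + e"
    using assms(2) by (simp add: rmax_def)
  then show ?thesis
    unfolding cINF_less_iff[OF dominating_nonempty[OF assms(1)] bdd_below_dominating[OF assms(1)]]
    by auto
qed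

lemma rmax_le_H: "X \<in> C \<Longrightarrow> rmax C H X \<le> H X"
  using rmax_le bounded by blast

lemma rmax_mono:
  assumes "Y \<in> bfun" "Z \<in> bfun" "\<And>w. Y w \<le> Z w"
  shows "rmax C H Y \<le> rmax C H Z"
  using assms(2) by (rule rmax_greatest) (use rmax_le[OF assms(1)] assms(3) order_trans in blast)

lemma rmax_add_const_le:
  assumes "Y \<in> bfun"
  shows "rmax C H (\<lambda>w. Y w + c) \<le> rmax C H Y + c"
proof -
  have "rmax C H (\<lambda>w. Y w + c) - c \<le> H X0" if "X0 \<in> C" "\<forall>w. Y w \<le> X0 w" for X0
  proof -
    have "rmax C H (\<lambda>w. Y w + c) \<le> H (\<lambda>w. X0 w + c)"
      using that(2)
      by (intro rmax_le[OF fun_subspace_add[OF fun_subspace_bfun assms bfun_const]]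
          add_const_mem[OF that(1)]) simp
    then show ?thesis by (simp add: H_add_const[OF that(1)])
  qed
  then show ?thesis using rmax_greatest[OF assms] by fastforce
qed

lemma convex_on_fun_rmax:
  assumes "convex_on_fun C H"
  shows "convex_on_fun bfun (rmax C H)"
  unfolding convex_on_fun_def
proof (intro ballI allI impI)
  fix Y Z :: "'a \<Rightarrow> real" and a :: real
  assume Y: "Y \<in> bfun" and Z: "Z \<in> bfun" and a: "0 \<le> a \<and> a \<le> 1"
  have YZ: "(\<lambda>w. a * Y w + (1 - a) * Z w) \<in> bfun"
    using fun_subspace_bfun Y Z by (intro fun_subspace_add fun_subspace_scale)
  have bound: "rmax C H (\<lambda>w. a * Y w + (1 - a) * Z w) \<le> a * H X1 + (1 - a) * H X2"
    if X1: "X1 \<in> C" "\<forall>w. Y w \<le> X1 w" and X2: "X2 \<in> C" "\<forall>w. Z w \<le> X2 w" for X1 X2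
  proof -
    have "rmax C H (\<lambda>w. a * Y w + (1 - a) * Z w) \<le> H (\<lambda>w. a * X1 w + (1 - a) * X2 w)"
      using X1 X2 a by (intro rmax_le[OF YZ] add_mem scale_mem add_mono mult_left_mono) auto
    also have "\<dots> \<le> a * H X1 + (1 - a) * H X2"
      using assms X1(1) X2(1) a by (intro convex_on_funD) auto
    finally show ?thesis .
  qed
  show "rmax C H (\<lambda>w. a * Y w + (1 - a) * Z w) \<le> a * rmax C H Y + (1 - a) * rmax C H Z"
  proof (rule field_le_epsilon)
    fix e :: real assume "0 < e"
    obtain X1 where X1: "X1 \<in> C" "\<forall>w. Y w \<le> X1 w" "H X1 < rmax C H Y + e"
      using rmax_approx[OF Y \<open>0 < e\<close>] by blast
    obtain X2 where X2: "X2 \<in> C" "\<forall>w. Z w \<le> X2 w" "H X2 < rmax C H Z + e"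
      using rmax_approx[OF Z \<open>0 < e\<close>] by blast
    have "a * H X1 + (1 - a) * H X2 \<le> a * (rmax C H Y + e) + (1 - a) * (rmax C H Z + e)"
      using X1(3) X2(3) a by (intro add_mono mult_left_mono) auto
    with bound[OF X1(1,2) X2(1,2)]
    show "rmax C H (\<lambda>w. a * Y w + (1 - a) * Z w) \<le> a * rmax C H Y + (1 - a) * rmax C H Z + e"
      by (simp add: algebra_simps)
  qed
qed

lemma rmax_subgradient:
  assumes "convex_on_fun C H" "X \<in> bfun"
  shows "\<exists>l. positive_unital_functional l \<and> (\<forall>Y\<in>bfun. l Y - l X \<le> rmax C H Y - rmax C H X)"
proof -
  define g where "g = (\<lambda>Y. rmax C H (\<lambda>w. X w + Y w) - rmax C H X)"
  have "convex_on_fun bfun g"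
    unfolding g_def
    by (rule convex_on_fun_translate[OF fun_subspace_bfun convex_on_fun_rmax[OF assms(1)] assms(2)])
  moreover have "0 \<le> g (\<lambda>_. 0)" by (simp add: g_def)
  ultimately obtain l where lin: "fun_linear_on bfun l" and le_g: "\<forall>Y\<in>bfun. l Y \<le> g Y"
    using hahn_banach_convex[OF fun_subspace_bfun] by blast
  have neg: "l (\<lambda>w. - x w) = - l x" if "x \<in> bfun" for x
    using fun_linear_on_scale[OF lin that, of "-1"] by simp
  have g_const: "g (\<lambda>_. c) \<le> c" for c
    using rmax_add_const_le[OF assms(2), of c] by (simp add: g_def)
  have "positive_unital_functional l"
  proof
    show "fun_linear_on bfun l" by (fact lin)
  next
    fix x :: "'a \<Rightarrow> real" assume x: "x \<in> bfun" "\<And>w. 0 \<le> x w"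
    have "l (\<lambda>w. - x w) \<le> g (\<lambda>w. - x w)"
      using le_g fun_subspace_scale[OF fun_subspace_bfun x(1), of "-1"] by simp
    also have "\<dots> \<le> 0"
      unfolding g_def using x
      by (simp add: rmax_mono assms(2) fun_subspace_diff[OF fun_subspace_bfun assms(2) x(1)])
    finally show "0 \<le> l x" using neg[OF x(1)] by simp
  next
    have "l (\<lambda>_. 1) \<le> 1" "l (\<lambda>_. - 1) \<le> - 1"
      using le_g bfun_const g_const order_trans by blast+
    then show "l (\<lambda>_. 1) = 1" using neg[OF bfun_const[of 1]] by simp
  qed
  moreover have "l Y - l X \<le> rmax C H Y - rmax C H X" if "Y \<in> bfun" for Y
  proof -
    have "l (\<lambda>w. Y w - X w) \<le> g (\<lambda>w. Y w - X w)"
      using le_g fun_subspace_diff[OF fun_subspace_bfun that assms(2)] by blast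
    then show ?thesis
      using fun_linear_on_diff[OF lin fun_subspace_bfun that assms(2)] by (simp add: g_def)
  qed
  ultimately show ?thesis by blast
qed

lemma DMin_eq: "X \<in> C \<Longrightarrow> DMin C H X = ereal (H X - rmax C H X)"
  using RMax_eq_rmax bounded by (auto simp: DMin_def)

lemma DP_eq: "X \<in> C \<Longrightarrow> DP M H P X = H X - ba_integral M P X"
  using H_add_const[of X "- ba_integral M P X"] by (simp add: DP_def)

lemma Hstar_ge: "Y \<in> C \<Longrightarrow> ereal (ba_integral M P Y - H Y) \<le> Hstar M C H P"
  unfolding Hstar_def by (rule SUP_upper)

theorem DMin_le_DP_plus_Hstar:
  assumes X: "X \<in> C" and P: "P \<in> Pset M C H"
  shows "DMin C H X \<le> ereal (DP M H P X) + Hstar M C H P"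
proof -
  have ba: "P \<in> ba1 M" and fin: "Hstar M C H P < \<infinity>" using P by (auto simp: Pset_def)
  obtain h where h: "Hstar M C H P = ereal h"
    using fin Hstar_ge[OF X, of M P] by (cases "Hstar M C H P") auto
  have "ba_integral M P X - h \<le> rmax C H X"
  proof (rule rmax_greatest)
    show "X \<in> bfun" using X bounded by blast
    fix X0 assume X0: "X0 \<in> C" "\<forall>w. X w \<le> X0 w"
    have "ba_integral M P X \<le> ba_integral M P X0"
      using X X0 bounded by (intro ba_integral_mono[OF ba]) auto
    moreover have "ba_integral M P X0 - H X0 \<le> h" using Hstar_ge[OF X0(1), of M P] h by simp
    ultimately show "ba_integral M P X - h \<le> H X0" by linarith
  qed
  then show ?thesis unfolding DMin_eq[OF X] DP_eq[OF X] h by simp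
qed

lemma Hstar_charge_le:
  assumes "space M = UNIV" "C \<subseteq> Bb M" "positive_unital_functional l"
    and subgradient: "\<forall>Y\<in>bfun. l Y - l X \<le> rmax C H Y - rmax C H X"
  shows "Hstar M C H (positive_unital_functional.charge l M) \<le> ereal (l X - rmax C H X)"
  unfolding Hstar_def
proof (rule SUP_least)
  fix Y assume Y: "Y \<in> C"
  then have "Y \<in> bfun" "Y \<in> borel_measurable M" using assms(2) bounded by (auto simp: Bb_def)
  then have "ba_integral M (positive_unital_functional.charge l M) Y = l Y"
    using positive_unital_functional.ba_integral_charge[OF assms(3,1)] by blast
  moreover have "rmax C H Y \<le> H Y" by (rule rmax_le_H[OF Y])
  ultimately show "ereal (ba_integral M (positive_unital_functional.charge l M) Y - H Y)
      \<le> ereal (l X - rmax C H X)"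
    using subgradient \<open>Y \<in> bfun\<close> by force
qed

lemma exists_DP_plus_Hstar_le_DMin:
  assumes "space M = UNIV" "C \<subseteq> Bb M" "convex_on_fun C H" "X \<in> C"
  shows "\<exists>P\<in>Pset M C H. ereal (DP M H P X) + Hstar M C H P \<le> DMin C H X"
proof -
  have X: "X \<in> bfun" using assms(4) bounded by blast
  obtain l where l: "positive_unital_functional l"
    and subgradient: "\<forall>Y\<in>bfun. l Y - l X \<le> rmax C H Y - rmax C H X"
    using rmax_subgradient[OF assms(3) X] by blast
  define P where "P = positive_unital_functional.charge l M"
  have Hstar_le: "Hstar M C H P \<le> ereal (l X - rmax C H X)"
    unfolding P_def by (rule Hstar_charge_le[OF assms(1,2) l subgradient])
  have P: "P \<in> Pset M C H"
    using positive_unital_functional.charge_ba1[OF l assms(1)] Hstar_le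
    by (auto simp: Pset_def P_def intro: le_less_trans)
  have "ba_integral M P X = l X"
    using assms(2,4) X positive_unital_functional.ba_integral_charge[OF l assms(1)]
    by (auto simp: P_def Bb_def)
  with add_left_mono[OF Hstar_le, of "ereal (DP M H P X)"]
  have "ereal (DP M H P X) + Hstar M C H P \<le> DMin C H X"
    by (simp add: DMin_eq[OF assms(4)] DP_eq[OF assms(4)])
  with P show ?thesis by blast
qed

end

theorem corollary3p4:
  fixes M :: "'a measure" and C :: "('a \<Rightarrow> real) set" and H :: "('a \<Rightarrow> real) \<Rightarrow> real"
  assumes "space M = UNIV"
    and "C \<subseteq> Bb M"
    and "lin_sub_const C"
    and "premium_principle C H"
    and "convex_on_fun C H"
    and "X \<in> C"
  shows "(\<exists>P\<in>Pset M C H. DMin C H X = ereal (DP M H P X) + Hstar M C H P) \<and>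
         (\<forall>P\<in>Pset M C H. DMin C H X \<le> ereal (DP M H P X) + Hstar M C H P)"
proof -
  interpret bounded_premium_principle C H
    using assms(2-4) Bb_subset_bfun by unfold_locales auto
  obtain P where "P \<in> Pset M C H" "ereal (DP M H P X) + Hstar M C H P \<le> DMin C H X"
    using exists_DP_plus_Hstar_le_DMin[OF assms(1,2,5,6)] by blast
  then show ?thesis
    using DMin_le_DP_plus_Hstar[OF assms(6)] by (metis antisym)
qed

end
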